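(* Let $r\ge1$ and let $F$ be a graph with chromatic number $\chi(F)=r+1$. Then for every real $p>1$, as $n\to\infty$, $$\mathrm{ex}^{(p)}_\lambda(n,F)=\lambda^{(p)}(T_r(n))+o\!\left(n^{2-2/p}\right)=\left(1-\frac1r+o(1)\right)n^{2-2/p}.$$
   Context: For a graph $G$ on vertex set $\{1,\dots,n\}$ and real $p\ge1$, the $p$-spectral radius is $\lambda^{(p)}(G)=\max\{2\sum_{\{i,j\}\in E(G)}x_ix_j:\ x\in\mathbb R^n,\ |x_1|^p+\dots+|x_n|^p=1\}$. $\mathrm{ex}^{(p)}_\lambda(n,F)$ is the maximum of $\lambda^{(p)}(G)$ over all $n$-vertex graphs $G$ containing no subgraph isomorphic to $F$. $T_r(n)$ is the Turán graph: the complete $r$-partite graph on $n$ vertices with part sizes as equal as possible. *)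

theory Defs
  imports Complex_Main "HOL-Library.Landau_Symbols"
begin

definition graph_on :: "nat \<Rightarrow> nat set set \<Rightarrow> bool" where
  "graph_on n E \<longleftrightarrow> (\<forall>e\<in>E. \<exists>i j. e = {i, j} \<and> i \<noteq> j \<and> i \<in> {1..n} \<and> j \<in> {1..n})"

definition p_spectral_radius :: "real \<Rightarrow> nat \<Rightarrow> nat set set \<Rightarrow> real" where
  "p_spectral_radius p n E =
     Sup {2 * (\<Sum>(i, j)\<in>{(i, j). i \<in> {1..n} \<and> j \<in> {1..n} \<and> i < j \<and> {i, j} \<in> E}. x i * x j)
          | x :: nat \<Rightarrow> real. (\<Sum>i\<in>{1..n}. \<bar>x i\<bar> powr p) = 1}"

definition contains_subgraph :: "nat \<Rightarrow> nat set set \<Rightarrow> nat \<Rightarrow> nat set set \<Rightarrow> bool" where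
  "contains_subgraph n E m EF \<longleftrightarrow>
     (\<exists>f. f ` {1..m} \<subseteq> {1..n} \<and> inj_on f {1..m} \<and> (\<forall>e\<in>EF. f ` e \<in> E))"

definition proper_colouring :: "nat \<Rightarrow> nat set set \<Rightarrow> nat \<Rightarrow> (nat \<Rightarrow> nat) \<Rightarrow> bool" where
  "proper_colouring m EF k c \<longleftrightarrow>
     (\<forall>i\<in>{1..m}. c i < k) \<and> (\<forall>i\<in>{1..m}. \<forall>j\<in>{1..m}. {i, j} \<in> EF \<longrightarrow> i \<noteq> j \<longrightarrow> c i \<noteq> c j)"

definition chromatic_number :: "nat \<Rightarrow> nat set set \<Rightarrow> nat" where
  "chromatic_number m EF = (LEAST k. \<exists>c. proper_colouring m EF k c)"

definition spectral_ex :: "real \<Rightarrow> nat \<Rightarrow> nat \<Rightarrow> nat set set \<Rightarrow> real" where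
  "spectral_ex p n m EF =
     Sup {p_spectral_radius p n E | E. graph_on n E \<and> \<not> contains_subgraph n E m EF}"

text \<open>Turan graph T_r(n) on {1..n}: parts are the residue classes mod r
  (complete r-partite, part sizes as equal as possible).\<close>
definition turan_graph :: "nat \<Rightarrow> nat \<Rightarrow> nat set set" where
  "turan_graph r n = {{i, j} | i j. i \<in> {1..n} \<and> j \<in> {1..n} \<and> i mod r \<noteq> j mod r}"

end

(* Lower bound: T_r(n) contains no copy of F, and the constant unit vector with entries n^(-1/p)
   shows lambda^(p)(T_r(n)) >= (1 - 1/r) n^(2-2/p) - n^(1-2/p), because every vertex of T_r(n)
   has degree at least n - n/r - 1.

   Upper bound: let x be a unit vector in the p-norm and y = |x| on the support of x. By Hoelder,
   y has total weight at most n^(1-1/p), and every entry is at most 1. If the quadratic form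
   exceeded (1 - 1/r + eps) n^(2-2/p), the total weight would be at least sqrt(eps) n^(1-1/p).
   So for large n no vertex would carry more than a theta-fraction of the weight, and the form
   would have density above 1 - 1/r. A weighted Erdos-Stone theorem then gives a copy of
   K_(r+1)(|F|), the complete (r+1)-partite graph with parts of size |F|. F embeds into this
   copy along a proper (r+1)-colouring.

   The weighted Erdos-Stone theorem: a vertex set maximising  form - c * weight^2  has large
   minimum weighted degree. The proof then goes by induction on the number of parts. Given a
   copy of K_k(T), the vertices with t neighbours in every part carry a lot of weight. By
   pigeonhole over their neighbourhoods in the copy, t of them have the same neighbourhood,
   and together with t common neighbours in each part they span K_(k+1)(t). *)

theory Submission
  imports Defs "HOL-Analysis.Convex"
begin

section \<open>Weighted graphs\<close>

definition wdeg :: "('a \<Rightarrow> 'a \<Rightarrow> bool) \<Rightarrow> ('a \<Rightarrow> real) \<Rightarrow> 'a set \<Rightarrow> 'a \<Rightarrow> real" where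
  "wdeg adj w S v = (\<Sum>u\<in>S. if adj v u then w u else 0)"

definition adj_form :: "('a \<Rightarrow> 'a \<Rightarrow> bool) \<Rightarrow> ('a \<Rightarrow> real) \<Rightarrow> 'a set \<Rightarrow> real" where
  "adj_form adj w S = (\<Sum>v\<in>S. w v * wdeg adj w S v)"

text \<open>\<open>S\<close> spans a copy of \<open>K\<^sub>k(t)\<close>, the complete \<open>k\<close>-partite graph with parts of size \<open>t\<close>
  (the parts are automatically disjoint when \<open>adj\<close> is irreflexive).\<close>
definition has_blowup :: "('a \<Rightarrow> 'a \<Rightarrow> bool) \<Rightarrow> 'a set \<Rightarrow> nat \<Rightarrow> nat \<Rightarrow> bool" where
  "has_blowup adj S k t \<longleftrightarrow> (\<exists>P. (\<forall>a<k. P a \<subseteq> S \<and> finite (P a) \<and> card (P a) = t) \<and>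
      (\<forall>a<k. \<forall>b<k. a \<noteq> b \<longrightarrow> (\<forall>x\<in>P a. \<forall>y\<in>P b. adj x y)))"

lemma wdeg_le_sum: "\<forall>u\<in>S. 0 \<le> w u \<Longrightarrow> wdeg adj w S v \<le> sum w S"
  unfolding wdeg_def by (auto intro: sum_mono)

lemma adj_form_le_square:
  assumes "\<forall>u\<in>S. 0 \<le> w u"
  shows "adj_form adj w S \<le> (sum w S)\<^sup>2"
proof -
  have "adj_form adj w S \<le> (\<Sum>v\<in>S. w v * sum w S)"
    unfolding adj_form_def using assms wdeg_le_sum[OF assms] by (intro sum_mono mult_left_mono) auto
  also have "\<dots> = (sum w S)\<^sup>2"
    by (simp add: sum_distrib_right power2_eq_square)
  finally show ?thesis .
qed

lemma adj_form_eq_double_sum: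
  "adj_form adj w S = (\<Sum>v\<in>S. \<Sum>u\<in>S. if adj v u then w v * w u else 0)"
  unfolding adj_form_def wdeg_def sum_distrib_left by (simp add: if_distrib cong: if_cong)

lemma adj_form_le_abs: "adj_form adj w S \<le> adj_form adj (\<lambda>v. \<bar>w v\<bar>) S"
  unfolding adj_form_eq_double_sum by (intro sum_mono) (auto simp: abs_mult[symmetric])

lemma adj_form_support:
  assumes "finite S" "V \<subseteq> S" "\<forall>v\<in>S - V. w v = 0"
  shows "adj_form adj w S = adj_form adj w V"
proof -
  have "(\<Sum>v\<in>S. \<Sum>u\<in>S. if adj v u then w v * w u else 0) = (\<Sum>v\<in>V. \<Sum>u\<in>S. if adj v u then w v * w u else 0)"
    using assms by (intro sum.mono_neutral_right) (auto intro!: sum.neutral)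
  also have "\<dots> = (\<Sum>v\<in>V. \<Sum>u\<in>V. if adj v u then w v * w u else 0)"
    using assms by (intro sum.cong sum.mono_neutral_right) auto
  finally show ?thesis unfolding adj_form_eq_double_sum .
qed

lemma wdeg_remove:
  assumes "finite S" "v \<in> S"
  shows "wdeg adj w S u = wdeg adj w (S - {v}) u + (if adj u v then w v else 0)"
  unfolding wdeg_def using assms by (simp add: sum.remove[of S v] algebra_simps)

lemma adj_form_remove:
  assumes "symp adj" "irreflp adj" "finite S" "v \<in> S"
  shows "adj_form adj w S = adj_form adj w (S - {v}) + 2 * w v * wdeg adj w S v"
proof -
  have "wdeg adj w (S - {v}) v = wdeg adj w S v"
    using wdeg_remove[OF assms(3,4), of adj w v] assms(2) by (simp add: irreflp_def)
  moreover have "(\<Sum>u\<in>S - {v}. w u * (if adj u v then w v else 0)) = w v * wdeg adj w (S - {v}) v"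
    unfolding wdeg_def sum_distrib_left using assms(1) by (intro sum.cong) (auto dest: sympD)
  ultimately show ?thesis
    unfolding adj_form_def using assms(3,4)
    by (simp add: sum.remove[of S v] wdeg_remove[OF assms(3,4)] sum.distrib algebra_simps)
qed

lemma sum_weight_card_neighbours:
  assumes "symp adj" "finite C"
  shows "(\<Sum>v\<in>S. w v * real (card {u\<in>C. adj v u})) = (\<Sum>u\<in>C. wdeg adj w S u)"
proof -
  have "(\<Sum>v\<in>S. w v * real (card {u\<in>C. adj v u})) = (\<Sum>v\<in>S. \<Sum>u\<in>C. if adj v u then w v else 0)"
    using assms(2) by (simp add: sum.If_cases sum_distrib_left Int_def conj_commute mult.commute)
  also have "\<dots> = (\<Sum>u\<in>C. wdeg adj w S u)"
    unfolding wdeg_def using assms(1) by (subst sum.swap) (auto intro!: sum.cong dest: sympD)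
  finally show ?thesis .
qed

lemma has_blowup_zero: "has_blowup adj S k 0"
  unfolding has_blowup_def by (rule exI[of _ "\<lambda>_. {}"]) auto

lemma has_blowup_mono:
  assumes "has_blowup adj S k t" "S \<subseteq> V"
  shows "has_blowup adj V k t"
proof -
  obtain P where "\<forall>a<k. P a \<subseteq> S \<and> finite (P a) \<and> card (P a) = t"
    and complete: "\<forall>a<k. \<forall>b<k. a \<noteq> b \<longrightarrow> (\<forall>x\<in>P a. \<forall>y\<in>P b. adj x y)"
    using assms(1) unfolding has_blowup_def by (elim exE conjE)
  then have "\<forall>a<k. P a \<subseteq> V \<and> finite (P a) \<and> card (P a) = t"
    using assms(2) by blast
  then show ?thesis
    unfolding has_blowup_def using complete by blast
qed

lemma has_blowup_Suc:
  assumes "symp adj"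
    and "\<forall>a<k. R a \<subseteq> S \<and> finite (R a) \<and> card (R a) = t"
    and "\<forall>a<k. \<forall>b<k. a \<noteq> b \<longrightarrow> (\<forall>x\<in>R a. \<forall>y\<in>R b. adj x y)"
    and "Q \<subseteq> S" "finite Q" "card Q = t" "\<forall>q\<in>Q. \<forall>a<k. \<forall>u\<in>R a. adj q u"
  shows "has_blowup adj S (Suc k) t"
  unfolding has_blowup_def
proof (intro exI[of _ "R(k := Q)"] conjI allI impI ballI)
  fix a b x y assume "a < Suc k" "b < Suc k" "a \<noteq> b" "x \<in> (R(k := Q)) a" "y \<in> (R(k := Q)) b"
  then consider "a < k" "b < k" "x \<in> R a" "y \<in> R b" | "a < k" "x \<in> R a" "y \<in> Q"
    | "b < k" "x \<in> Q" "y \<in> R b"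
    by (auto simp: less_Suc_eq split: if_splits)
  then show "adj x y"
    using assms(3,7) \<open>a \<noteq> b\<close> sympD[OF assms(1)] by cases blast+
qed (use assms in \<open>auto simp: less_Suc_eq\<close>)

section \<open>A weighted Erdos-Stone theorem\<close>

lemma card_neighbours_in_parts_le:
  assumes parts: "\<forall>a<k. finite (P a) \<and> card (P a) = T"
    and disj: "\<forall>a<k. \<forall>b<k. a \<noteq> b \<longrightarrow> P a \<inter> P b = {}"
  shows "card {u \<in> (\<Union>a<k. P a). adj v u}
    \<le> (k - 1) * T + t + (if \<forall>a<k. t \<le> card {u \<in> P a. adj v u} then T else 0)"
proof -
  have "{u \<in> (\<Union>a<k. P a). adj v u} = (\<Union>a<k. {u \<in> P a. adj v u})"
    by auto
  then have card_eq: "card {u \<in> (\<Union>a<k. P a). adj v u} = (\<Sum>a<k. card {u \<in> P a. adj v u})"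
    using parts disj by (simp add: card_UN_disjoint disjoint_iff)
  have part_le: "card {u \<in> P a. adj v u} \<le> T" if "a < k" for a
    using parts that by (metis (no_types, lifting) card_mono mem_Collect_eq subsetI)
  show ?thesis
  proof (cases "\<forall>a<k. t \<le> card {u \<in> P a. adj v u}")
    case True
    have "(\<Sum>a<k. card {u \<in> P a. adj v u}) \<le> k * T"
      using sum_mono[of "{..<k}" "\<lambda>a. card {u \<in> P a. adj v u}" "\<lambda>_. T"] part_le by simp
    also have "\<dots> \<le> (k - 1) * T + T"
      by (cases k) auto
    finally show ?thesis
      using True card_eq by simp
  next
    case False
    then obtain a0 where a0: "a0 < k" "card {u \<in> P a0. adj v u} < t"
      by (auto simp: not_le)
    have "(\<Sum>a<k. card {u \<in> P a. adj v u})
        = card {u \<in> P a0. adj v u} + (\<Sum>a\<in>{..<k} - {a0}. card {u \<in> P a. adj v u})"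
      using a0 by (simp add: sum.remove)
    also have "\<dots> \<le> t + (\<Sum>a\<in>{..<k} - {a0}. T)"
      using a0 part_le by (intro add_mono sum_mono) auto
    also have "\<dots> = t + (k - 1) * T"
      using a0 by simp
    finally show ?thesis
      using False card_eq by simp
  qed
qed

lemma sum_weight_card_neighbours_in_parts_le:
  assumes "finite S" and w: "\<forall>v\<in>S. 0 \<le> w v"
    and parts: "\<forall>a<k. finite (P a) \<and> card (P a) = T"
    and disj: "\<forall>a<k. \<forall>b<k. a \<noteq> b \<longrightarrow> P a \<inter> P b = {}"
  shows "(\<Sum>v\<in>S. w v * real (card {u \<in> (\<Union>a<k. P a). adj v u}))
    \<le> real ((k - 1) * T + t) * sum w S + real T * sum w {v \<in> S. \<forall>a<k. t \<le> card {u \<in> P a. adj v u}}"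
proof -
  define good where "good v \<longleftrightarrow> (\<forall>a<k. t \<le> card {u \<in> P a. adj v u})" for v
  have "(\<Sum>v\<in>S. w v * real (card {u \<in> (\<Union>a<k. P a). adj v u}))
      \<le> (\<Sum>v\<in>S. w v * real ((k - 1) * T + t) + w v * (if good v then real T else 0))"
  proof (intro sum_mono)
    fix v assume "v \<in> S"
    have "card {u \<in> (\<Union>a<k. P a). adj v u} \<le> (k - 1) * T + t + (if good v then T else 0)"
      using card_neighbours_in_parts_le[OF parts disj, of adj v t] unfolding good_def by simp
    then have "real (card {u \<in> (\<Union>a<k. P a). adj v u}) \<le> real ((k - 1) * T + t) + (if good v then real T else 0)"
      by (cases "good v") (simp_all flip: of_nat_add)
    then show "w v * real (card {u \<in> (\<Union>a<k. P a). adj v u})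
        \<le> w v * real ((k - 1) * T + t) + w v * (if good v then real T else 0)"
      using w \<open>v \<in> S\<close> by (simp add: mult_left_mono flip: distrib_left)
  qed
  also have "\<dots> = real ((k - 1) * T + t) * sum w S + real T * sum w {v \<in> S. good v}"
  proof -
    have "(\<Sum>v\<in>S. w v * (if good v then real T else 0)) = real T * sum w {v \<in> S. good v}"
      using assms(1) by (auto simp: sum.inter_filter sum_distrib_left mult.commute intro!: sum.cong)
    moreover have "(\<Sum>v\<in>S. w v * real ((k - 1) * T + t)) = real ((k - 1) * T + t) * sum w S"
      by (rule sum_distrib_right[symmetric, THEN trans]) simp
    ultimately show ?thesis
      by (simp add: sum.distrib)
  qed
  finally show ?thesis
    unfolding good_def .
qed

lemma good_vertices_heavy:
  assumes "symp adj" "finite S" and w: "\<forall>v\<in>S. 0 \<le> w v"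
    and parts: "\<forall>a<k. P a \<subseteq> S \<and> finite (P a) \<and> card (P a) = T"
    and disj: "\<forall>a<k. \<forall>b<k. a \<noteq> b \<longrightarrow> P a \<inter> P b = {}"
    and "1 \<le> k" "1 \<le> T" "0 \<le> \<epsilon>" and t: "real t \<le> \<epsilon> / 2 * real T"
    and deg: "\<forall>v\<in>S. ((real k - 1) / real k + \<epsilon>) * sum w S \<le> wdeg adj w S v"
  shows "\<epsilon> / 2 * sum w S \<le> sum w {v \<in> S. \<forall>a<k. t \<le> card {u \<in> P a. adj v u}}"
proof -
  define C where "C = (\<Union>a<k. P a)"
  define W where "W = sum w S"
  define g where "g = sum w {v \<in> S. \<forall>a<k. t \<le> card {u \<in> P a. adj v u}}"
  have "finite C" "C \<subseteq> S"
    using parts unfolding C_def by auto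
  have "card C = k * T"
    unfolding C_def using parts disj by (simp add: card_UN_disjoint disjoint_iff)
  have W: "0 \<le> W"
    unfolding W_def using w by (simp add: sum_nonneg)
  have "real (k * T) * (((real k - 1) / real k + \<epsilon>) * W) \<le> (\<Sum>u\<in>C. wdeg adj w S u)"
    using sum_bounded_below[of C "((real k - 1) / real k + \<epsilon>) * W" "wdeg adj w S"]
      deg \<open>C \<subseteq> S\<close> \<open>card C = k * T\<close> unfolding W_def by auto
  also have "\<dots> = (\<Sum>v\<in>S. w v * real (card {u \<in> C. adj v u}))"
    using sum_weight_card_neighbours[OF assms(1) \<open>finite C\<close>] by simp
  also have "\<dots> \<le> real ((k - 1) * T + t) * W + real T * g"
    unfolding C_def W_def g_def using sum_weight_card_neighbours_in_parts_le[OF assms(2) w _ disj] parts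
    by blast
  finally have "real (k * T) * (((real k - 1) / real k + \<epsilon>) * W) \<le> real ((k - 1) * T + t) * W + real T * g" .
  moreover have "real (k * T) * (((real k - 1) / real k + \<epsilon>) * W) = real ((k - 1) * T) * W + real k * real T * \<epsilon> * W"
    using \<open>1 \<le> k\<close> by (simp add: field_simps)
  moreover have "real T * \<epsilon> * W \<le> real k * real T * \<epsilon> * W"
    using mult_right_mono[of 1 "real k" "real T * \<epsilon> * W"] \<open>1 \<le> k\<close> \<open>0 \<le> \<epsilon>\<close> W
    by (simp add: mult.assoc)
  moreover have "real t * W \<le> \<epsilon> / 2 * real T * W"
    using mult_right_mono[OF t W] .
  ultimately have "real T * (\<epsilon> / 2 * W) \<le> real T * g"
    by (simp add: algebra_simps)
  then show ?thesis
    using \<open>1 \<le> T\<close> unfolding W_def g_def by simp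
qed

lemma weighted_pigeonhole:
  assumes "finite G" "\<forall>v\<in>G. w v \<le> b" "0 \<le> b"
    and "real (card (f ` G)) * real t * b < sum w G"
  obtains X where "t \<le> card {v \<in> G. f v = X}"
proof -
  have "\<exists>X. t \<le> card {v \<in> G. f v = X}"
  proof (rule ccontr)
    assume "\<nexists>X. t \<le> card {v \<in> G. f v = X}"
    then have "card {v \<in> G. f v = X} \<le> t" for X
      by (meson nat_le_linear)
    have class_le: "sum w {v \<in> G. f v = X} \<le> real t * b" for X
    proof -
      have "sum w {v \<in> G. f v = X} \<le> real (card {v \<in> G. f v = X}) * b"
        using sum_bounded_above[of "{v \<in> G. f v = X}" w b] assms(2) by simp
      also have "\<dots> \<le> real t * b"
        using \<open>card {v \<in> G. f v = X} \<le> t\<close> assms(3) by (simp add: mult_right_mono)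
      finally show ?thesis .
    qed
    have "sum w G = (\<Sum>X\<in>f ` G. sum w {v \<in> G. f v = X})"
      using assms(1) by (rule sum.image_gen)
    also have "\<dots> \<le> real (card (f ` G)) * real t * b"
      using sum_bounded_above[of "f ` G" "\<lambda>X. sum w {v \<in> G. f v = X}" "real t * b"] class_le
      by (simp add: mult.assoc)
    finally show False
      using assms(4) by simp
  qed
  then show thesis
    using that by blast
qed

lemma obtain_common_neighbourhood:
  assumes "finite G" "finite C" "\<forall>v\<in>G. w v \<le> b" "0 \<le> b"
    and "2 ^ card C * real t * b < sum w G"
  obtains Q where "Q \<subseteq> G" "finite Q" "card Q = t"
    and "\<forall>q\<in>Q. \<forall>q'\<in>Q. {u \<in> C. adj q u} = {u \<in> C. adj q' u}"
proof -
  have "(\<lambda>v. {u \<in> C. adj v u}) ` G \<subseteq> Pow C"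
    by auto
  then have "card ((\<lambda>v. {u \<in> C. adj v u}) ` G) \<le> card (Pow C)"
    using assms(2) by (intro card_mono) auto
  then have "card ((\<lambda>v. {u \<in> C. adj v u}) ` G) \<le> 2 ^ card C"
    using assms(2) by (simp add: card_Pow)
  then have "real (card ((\<lambda>v. {u \<in> C. adj v u}) ` G)) \<le> 2 ^ card C"
    by (metis of_nat_le_iff of_nat_numeral of_nat_power)
  then have "real (card ((\<lambda>v. {u \<in> C. adj v u}) ` G)) * real t * b \<le> 2 ^ card C * real t * b"
    by (rule mult_right_mono[OF mult_right_mono]) (use assms(4) in auto)
  then have "real (card ((\<lambda>v. {u \<in> C. adj v u}) ` G)) * real t * b < sum w G"
    using assms(5) by linarith
  then obtain X where "t \<le> card {v \<in> G. {u \<in> C. adj v u} = X}"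
    by (rule weighted_pigeonhole[OF assms(1,3,4)])
  then obtain Q where "Q \<subseteq> {v \<in> G. {u \<in> C. adj v u} = X}" "card Q = t" "finite Q"
    by (meson obtain_subset_with_card_n)
  then show thesis
    by (intro that[of Q]) auto
qed

lemma obtain_neighbour_subparts:
  assumes "\<forall>a<k. t \<le> card {u \<in> P a. adj v u}"
  obtains R where "\<forall>a<k. R a \<subseteq> P a \<and> (\<forall>u\<in>R a. adj v u) \<and> finite (R a) \<and> card (R a) = t"
proof -
  have "\<forall>a. \<exists>R. a < k \<longrightarrow> R \<subseteq> {u \<in> P a. adj v u} \<and> finite R \<and> card R = t"
    using assms by (metis obtain_subset_with_card_n)
  then obtain R where "\<forall>a<k. R a \<subseteq> {u \<in> P a. adj v u} \<and> finite (R a) \<and> card (R a) = t"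
    by metis
  then show thesis
    using that by blast
qed

lemma sum_diff_ge:
  assumes "finite A" "finite C" "\<forall>v\<in>C. 0 \<le> w v \<and> w v \<le> b"
  shows "sum w A - real (card C) * b \<le> sum w (A - C)"
proof -
  have "sum w (A \<inter> C) \<le> sum w C"
    using assms by (intro sum_mono2) auto
  also have "\<dots> \<le> real (card C) * b"
    using sum_bounded_above[of C w b] assms(3) by auto
  finally show ?thesis
    using sum.Int_Diff[OF assms(1), of w C] by simp
qed

lemma has_blowup_Suc_of_common_neighbours:
  assumes "symp adj"
    and parts: "\<forall>a<k. P a \<subseteq> S \<and> finite (P a) \<and> card (P a) = T"
    and complete: "\<forall>a<k. \<forall>b<k. a \<noteq> b \<longrightarrow> (\<forall>x\<in>P a. \<forall>y\<in>P b. adj x y)"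
    and "Q \<subseteq> S" "finite Q" "card Q = t" "v \<in> Q"
    and "\<forall>a<k. t \<le> card {u \<in> P a. adj v u}"
    and twins: "\<forall>q\<in>Q. {u \<in> (\<Union>a<k. P a). adj q u} = {u \<in> (\<Union>a<k. P a). adj v u}"
  shows "has_blowup adj S (Suc k) t"
proof -
  obtain R where R: "\<forall>a<k. R a \<subseteq> P a \<and> (\<forall>u\<in>R a. adj v u) \<and> finite (R a) \<and> card (R a) = t"
    using obtain_neighbour_subparts[of k t P adj v] assms(8) by blast
  show ?thesis
  proof (rule has_blowup_Suc[OF assms(1), of k R S t Q])
    show "\<forall>a<k. R a \<subseteq> S \<and> finite (R a) \<and> card (R a) = t"
      using R parts by blast
    show "\<forall>a<k. \<forall>b<k. a \<noteq> b \<longrightarrow> (\<forall>x\<in>R a. \<forall>y\<in>R b. adj x y)"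
      using R complete by blast
    show "\<forall>q\<in>Q. \<forall>a<k. \<forall>u\<in>R a. adj q u"
    proof (intro ballI allI impI)
      fix q a u assume "q \<in> Q" "a < k" "u \<in> R a"
      then have "u \<in> {u \<in> (\<Union>a<k. P a). adj v u}"
        using R by blast
      then show "adj q u"
        using twins \<open>q \<in> Q\<close> by blast
    qed
  qed (use assms(4-6) in auto)
qed

lemma has_blowup_Suc_of_min_wdeg:
  assumes sym: "symp adj" and irr: "irreflp adj" and fin: "finite S"
    and small: "\<forall>v\<in>S. 0 \<le> w v \<and> w v \<le> \<theta> * sum w S" and pos: "0 < sum w S"
    and deg: "\<forall>v\<in>S. ((real k - 1) / real k + \<epsilon>) * sum w S \<le> wdeg adj w S v"
    and KT: "has_blowup adj S k T" and "0 \<le> \<theta>"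
    and "1 \<le> k" "1 \<le> t" "1 \<le> T" "0 \<le> \<epsilon>" and tT: "real t \<le> \<epsilon> / 2 * real T"
    and \<theta>: "(real (k * T) + 2 ^ (k * T) * real t) * \<theta> < \<epsilon> / 2"
  shows "has_blowup adj S (Suc k) t"
proof -
  obtain P where parts: "\<forall>a<k. P a \<subseteq> S \<and> finite (P a) \<and> card (P a) = T"
    and complete: "\<forall>a<k. \<forall>b<k. a \<noteq> b \<longrightarrow> (\<forall>x\<in>P a. \<forall>y\<in>P b. adj x y)"
    using KT unfolding has_blowup_def by blast
  have disj: "\<forall>a<k. \<forall>b<k. a \<noteq> b \<longrightarrow> P a \<inter> P b = {}"
    using complete irr by (meson disjoint_iff irreflpD)
  define W where "W = sum w S"
  define C where "C = (\<Union>a<k. P a)"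
  define good where "good = {v \<in> S. \<forall>a<k. t \<le> card {u \<in> P a. adj v u}}"
  have "finite C" "C \<subseteq> S"
    using parts unfolding C_def by auto
  have "card C = k * T"
    unfolding C_def using parts disj by (simp add: card_UN_disjoint disjoint_iff)
  have "\<epsilon> / 2 * W \<le> sum w good"
    unfolding W_def good_def using good_vertices_heavy[OF sym fin _ parts disj] small assms(9,11,12) tT deg
    by blast
  moreover have "sum w good - real (card C) * (\<theta> * W) \<le> sum w (good - C)"
    using small \<open>C \<subseteq> S\<close> fin \<open>finite C\<close> unfolding good_def W_def by (intro sum_diff_ge) auto
  moreover have "(real (k * T) + 2 ^ (k * T) * real t) * \<theta> * W < \<epsilon> / 2 * W"
    using \<theta> pos unfolding W_def by (simp add: mult_strict_right_mono)
  ultimately have "2 ^ card C * real t * (\<theta> * W) < sum w (good - C)"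
    using \<open>card C = k * T\<close> by (simp add: algebra_simps)
  moreover have "0 \<le> \<theta> * W"
    using \<open>0 \<le> \<theta>\<close> pos unfolding W_def by simp
  ultimately obtain Q where Q: "Q \<subseteq> good - C" "finite Q" "card Q = t"
    and twins: "\<forall>q\<in>Q. \<forall>q'\<in>Q. {u \<in> C. adj q u} = {u \<in> C. adj q' u}"
    using obtain_common_neighbourhood[of "good - C" C w "\<theta> * W" t adj] fin \<open>finite C\<close> small
    unfolding good_def W_def by auto
  obtain v0 where "v0 \<in> Q"
    using Q \<open>1 \<le> t\<close> by fastforce
  show ?thesis
  proof (rule has_blowup_Suc_of_common_neighbours[OF sym parts complete _ _ _ \<open>v0 \<in> Q\<close>])
    show "Q \<subseteq> S" "finite Q" "card Q = t"
      using Q unfolding good_def by auto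
    show "\<forall>a<k. t \<le> card {u \<in> P a. adj v0 u}"
      using Q(1) \<open>v0 \<in> Q\<close> unfolding good_def by auto
    show "\<forall>q\<in>Q. {u \<in> (\<Union>a<k. P a). adj q u} = {u \<in> (\<Union>a<k. P a). adj v0 u}"
      using twins[rule_format, OF _ \<open>v0 \<in> Q\<close>] unfolding C_def by blast
  qed
qed

lemma has_blowup_one:
  assumes "t \<le> card S"
  shows "has_blowup adj S 1 t"
proof -
  obtain T where "T \<subseteq> S" "card T = t" "finite T"
    using obtain_subset_with_card_n[OF assms] by metis
  then show ?thesis
    unfolding has_blowup_def by (intro exI[of _ "\<lambda>_. T"]) auto
qed

lemma card_ge_of_small_weights:
  assumes "finite S" "\<forall>v\<in>S. w v \<le> \<theta> * sum w S" "0 < sum w S"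
  shows "1 \<le> \<theta> * real (card S)"
proof -
  have "sum w S \<le> real (card S) * (\<theta> * sum w S)"
    using sum_bounded_above[of S w "\<theta> * sum w S"] assms(2) by auto
  then show ?thesis
    using assms(3) by (simp add: algebra_simps)
qed

lemma min_wdeg_forces_blowup_Suc:
  assumes "0 < \<epsilon>" "1 \<le> t" "1 \<le> T" "real t \<le> \<epsilon> / 2 * real T" "0 < \<theta>\<^sub>1"
    and IH: "\<forall>(adj :: 'a \<Rightarrow> 'a \<Rightarrow> bool) w S. symp adj \<longrightarrow> irreflp adj \<longrightarrow> finite S \<longrightarrow>
      (\<forall>v\<in>S. 0 \<le> w v \<and> w v \<le> \<theta>\<^sub>1 * sum w S) \<longrightarrow> 0 < sum w S \<longrightarrow>
      (\<forall>v\<in>S. ((real j - 1) / real j + \<epsilon>) * sum w S \<le> wdeg adj w S v) \<longrightarrow>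
      has_blowup adj S (Suc j) T"
  shows "\<exists>\<theta>>0. \<forall>(adj :: 'a \<Rightarrow> 'a \<Rightarrow> bool) w S. symp adj \<longrightarrow> irreflp adj \<longrightarrow> finite S \<longrightarrow>
      (\<forall>v\<in>S. 0 \<le> w v \<and> w v \<le> \<theta> * sum w S) \<longrightarrow> 0 < sum w S \<longrightarrow>
      (\<forall>v\<in>S. ((real (Suc j) - 1) / real (Suc j) + \<epsilon>) * sum w S \<le> wdeg adj w S v) \<longrightarrow>
      has_blowup adj S (Suc (Suc j)) t"
proof -
  define A where "A = real (Suc j * T) + 2 ^ (Suc j * T) * real t"
  have "0 < A"
    unfolding A_def using \<open>1 \<le> T\<close> by (simp add: add_pos_nonneg)
  define \<theta> where "\<theta> = min \<theta>\<^sub>1 (\<epsilon> / (4 * A))"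
  have "0 < \<theta>"
    unfolding \<theta>_def using \<open>0 < \<theta>\<^sub>1\<close> \<open>0 < \<epsilon>\<close> \<open>0 < A\<close> by simp
  have "A * \<theta> \<le> \<epsilon> / 4"
    using mult_left_mono[OF min.cobounded2[of \<theta>\<^sub>1 "\<epsilon> / (4 * A)"], of A] \<open>0 < A\<close>
    unfolding \<theta>_def by simp
  then have A\<theta>: "A * \<theta> < \<epsilon> / 2"
    using \<open>0 < \<epsilon>\<close> by linarith
  have threshold_mono: "(real j - 1) / real j \<le> (real (Suc j) - 1) / real (Suc j)"
    by (cases j) (auto simp: field_simps)
  show ?thesis
  proof (intro exI[of _ \<theta>] conjI allI impI \<open>0 < \<theta>\<close>)
    fix adj :: "'a \<Rightarrow> 'a \<Rightarrow> bool" and w S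
    assume sym: "symp adj" and irr: "irreflp adj" and fin: "finite S"
      and small: "\<forall>v\<in>S. 0 \<le> w v \<and> w v \<le> \<theta> * sum w S" and pos: "0 < sum w S"
      and deg: "\<forall>v\<in>S. ((real (Suc j) - 1) / real (Suc j) + \<epsilon>) * sum w S \<le> wdeg adj w S v"
    have "\<theta> * sum w S \<le> \<theta>\<^sub>1 * sum w S"
      using pos unfolding \<theta>_def by (simp add: mult_right_mono)
    then have small\<^sub>1: "\<forall>v\<in>S. 0 \<le> w v \<and> w v \<le> \<theta>\<^sub>1 * sum w S"
      using small by (meson order_trans)
    have "((real j - 1) / real j + \<epsilon>) * sum w S \<le> ((real (Suc j) - 1) / real (Suc j) + \<epsilon>) * sum w S"
      using threshold_mono pos by (simp add: mult_right_mono)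
    then have deg\<^sub>1: "\<forall>v\<in>S. ((real j - 1) / real j + \<epsilon>) * sum w S \<le> wdeg adj w S v"
      using deg by (meson order_trans)
    have "has_blowup adj S (Suc j) T"
      using IH sym irr fin small\<^sub>1 pos deg\<^sub>1 by blast
    then show "has_blowup adj S (Suc (Suc j)) t"
    proof (rule has_blowup_Suc_of_min_wdeg[OF sym irr fin small pos deg _ less_imp_le[OF \<open>0 < \<theta>\<close>]])
      show "(real (Suc j * T) + 2 ^ (Suc j * T) * real t) * \<theta> < \<epsilon> / 2"
        using A\<theta> unfolding A_def by (simp add: mult.commute)
    qed (use assms(1-4) in auto)
  qed
qed

text \<open>The threshold \<open>(j - 1) / j\<close> is \<open>0\<close> for \<open>j = 0\<close> (division by zero), which is right:
  a copy of \<open>K\<^sub>1(t)\<close> only needs \<open>t\<close> vertices.\<close>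
lemma min_wdeg_forces_blowup:
  assumes "0 < \<epsilon>"
  shows "\<exists>\<theta>>0. \<forall>(adj :: 'a \<Rightarrow> 'a \<Rightarrow> bool) w S. symp adj \<longrightarrow> irreflp adj \<longrightarrow> finite S \<longrightarrow>
    (\<forall>v\<in>S. 0 \<le> w v \<and> w v \<le> \<theta> * sum w S) \<longrightarrow> 0 < sum w S \<longrightarrow>
    (\<forall>v\<in>S. ((real j - 1) / real j + \<epsilon>) * sum w S \<le> wdeg adj w S v) \<longrightarrow>
    has_blowup adj S (Suc j) t"
proof (induction j arbitrary: t)
  case 0
  have "has_blowup adj S 1 t"
    if "finite S" "\<forall>v\<in>S. w v \<le> 1 / (real t + 1) * sum w S" "0 < sum w S"
    for adj :: "'a \<Rightarrow> 'a \<Rightarrow> bool" and w S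
    using card_ge_of_small_weights[OF that] by (intro has_blowup_one) (simp add: field_simps)
  then show ?case
    by (intro exI[of _ "1 / (real t + 1)"]) auto
next
  case (Suc j)
  show ?case
  proof (cases "t = 0")
    case True
    then show ?thesis
      using has_blowup_zero by (intro exI[of _ 1]) auto
  next
    case False
    define T where "T = nat \<lceil>2 * real t / \<epsilon>\<rceil> + 1"
    have "2 * real t / \<epsilon> \<le> real T"
      unfolding T_def by linarith
    then have "real t \<le> \<epsilon> / 2 * real T"
      using assms by (simp add: field_simps)
    moreover have "1 \<le> t" "1 \<le> T"
      using False unfolding T_def by simp_all
    moreover obtain \<theta>\<^sub>1 where "0 < \<theta>\<^sub>1" and "\<forall>(adj :: 'a \<Rightarrow> 'a \<Rightarrow> bool) w S. symp adj \<longrightarrow> irreflp adj \<longrightarrow>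
        finite S \<longrightarrow> (\<forall>v\<in>S. 0 \<le> w v \<and> w v \<le> \<theta>\<^sub>1 * sum w S) \<longrightarrow> 0 < sum w S \<longrightarrow>
        (\<forall>v\<in>S. ((real j - 1) / real j + \<epsilon>) * sum w S \<le> wdeg adj w S v) \<longrightarrow>
        has_blowup adj S (Suc j) T"
      using Suc.IH by blast
    ultimately show ?thesis
      using min_wdeg_forces_blowup_Suc[OF assms] by blast
  qed
qed

lemma obtain_subset_maximising:
  fixes \<Phi> :: "'a set \<Rightarrow> 'b::linorder"
  assumes "finite V"
  obtains S where "S \<subseteq> V" "\<And>S'. S' \<subseteq> V \<Longrightarrow> \<Phi> S' \<le> \<Phi> S"
proof -
  have "Max (\<Phi> ` Pow V) \<in> \<Phi> ` Pow V"
    using assms by (intro Max_in) auto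
  then obtain S where "S \<subseteq> V" "Max (\<Phi> ` Pow V) = \<Phi> S"
    by auto
  moreover have "\<Phi> S' \<le> Max (\<Phi> ` Pow V)" if "S' \<subseteq> V" for S'
    using assms that by (intro Max_ge) auto
  ultimately show thesis
    using that by metis
qed

text \<open>Take \<open>S\<close> maximising \<open>adj_form adj w S - c * (sum w S)\<^sup>2\<close>: deleting a vertex of \<open>S\<close> cannot
  increase this quantity, and that is exactly the degree condition.\<close>
lemma obtain_min_wdeg_subset:
  assumes sym: "symp adj" and irr: "irreflp adj" and fin: "finite V"
    and pos: "\<forall>v\<in>V. 0 < w v" and "0 \<le> c"
    and dense: "(c + \<eta>) * (sum w V)\<^sup>2 \<le> adj_form adj w V"
  obtains S where "S \<subseteq> V" "\<eta> * (sum w V)\<^sup>2 \<le> (sum w S)\<^sup>2"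
    and "\<forall>v\<in>S. c * (sum w S - w v / 2) \<le> wdeg adj w S v"
proof -
  define \<Phi> where "\<Phi> S = adj_form adj w S - c * (sum w S)\<^sup>2" for S
  obtain S where "S \<subseteq> V" and max: "\<And>S'. S' \<subseteq> V \<Longrightarrow> \<Phi> S' \<le> \<Phi> S"
    using obtain_subset_maximising[OF fin] by metis
  have "finite S"
    using \<open>S \<subseteq> V\<close> fin finite_subset by blast
  have "\<eta> * (sum w V)\<^sup>2 \<le> \<Phi> V"
    unfolding \<Phi>_def using dense by (simp add: algebra_simps)
  also have "\<dots> \<le> \<Phi> S"
    using max by simp
  also have "\<dots> \<le> adj_form adj w S"
    unfolding \<Phi>_def using \<open>0 \<le> c\<close> by simp
  also have "\<dots> \<le> (sum w S)\<^sup>2"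
    using adj_form_le_square pos \<open>S \<subseteq> V\<close> by (metis less_imp_le subsetD)
  finally have "\<eta> * (sum w V)\<^sup>2 \<le> (sum w S)\<^sup>2" .
  moreover have "c * (sum w S - w v / 2) \<le> wdeg adj w S v" if "v \<in> S" for v
  proof -
    have "\<Phi> (S - {v}) \<le> \<Phi> S"
      using max \<open>S \<subseteq> V\<close> by blast
    moreover have "sum w (S - {v}) = sum w S - w v"
      using \<open>finite S\<close> that by (simp add: sum_diff1)
    ultimately have "c * ((sum w S)\<^sup>2 - (sum w S - w v)\<^sup>2) \<le> 2 * w v * wdeg adj w S v"
      unfolding \<Phi>_def using adj_form_remove[OF sym irr \<open>finite S\<close> that, of w]
      by (simp add: right_diff_distrib)
    moreover have "c * ((sum w S)\<^sup>2 - (sum w S - w v)\<^sup>2) = 2 * w v * (c * (sum w S - w v / 2))"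
      by (simp add: power2_eq_square algebra_simps)
    ultimately have "2 * w v * (c * (sum w S - w v / 2)) \<le> 2 * w v * wdeg adj w S v"
      by simp
    then show ?thesis
      using pos that \<open>S \<subseteq> V\<close> by (simp add: subset_iff)
  qed
  ultimately show thesis
    using that \<open>S \<subseteq> V\<close> by blast
qed

lemma sqrt_mult_le_of_mult_square_le:
  fixes a b \<eta> :: real
  assumes "\<eta> * a\<^sup>2 \<le> b\<^sup>2" "0 \<le> a" "0 \<le> b"
  shows "sqrt \<eta> * a \<le> b"
  using real_sqrt_le_mono[OF assms(1)] assms(2,3) by (simp add: real_sqrt_mult)

lemma small_weights_of_heavy_subset:
  assumes heavy: "\<eta> * (sum w V)\<^sup>2 \<le> (sum w S)\<^sup>2" and "S \<subseteq> V"
    and small: "\<forall>v\<in>V. 0 < w v \<and> w v \<le> \<delta> * sqrt \<eta> * sum w V"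
    and "0 \<le> \<delta>" "0 < \<eta>" "0 < sum w V"
  shows "0 < sum w S" "\<forall>v\<in>S. 0 \<le> w v \<and> w v \<le> \<delta> * sum w S"
proof -
  have "0 \<le> sum w S"
    using small \<open>S \<subseteq> V\<close> by (meson less_imp_le subsetD sum_nonneg)
  then have "sqrt \<eta> * sum w V \<le> sum w S"
    using sqrt_mult_le_of_mult_square_le[OF heavy] \<open>0 < sum w V\<close> by simp
  moreover have "0 < sqrt \<eta> * sum w V"
    using \<open>0 < sum w V\<close> \<open>0 < \<eta>\<close> by simp
  ultimately show "0 < sum w S"
    by linarith
  show "\<forall>v\<in>S. 0 \<le> w v \<and> w v \<le> \<delta> * sum w S"
  proof
    fix v assume "v \<in> S"
    then have "0 < w v" "w v \<le> \<delta> * (sqrt \<eta> * sum w V)"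
      using small \<open>S \<subseteq> V\<close> by (auto simp: mult.assoc)
    moreover have "\<delta> * (sqrt \<eta> * sum w V) \<le> \<delta> * sum w S"
      using \<open>sqrt \<eta> * sum w V \<le> sum w S\<close> \<open>0 \<le> \<delta>\<close> by (rule mult_left_mono)
    ultimately show "0 \<le> w v \<and> w v \<le> \<delta> * sum w S"
      by linarith
  qed
qed

lemma obtain_min_wdeg_subset_of_dense:
  assumes sym: "symp adj" and irr: "irreflp adj" and fin: "finite V"
    and "1 \<le> r" "0 < \<epsilon>" "\<epsilon> \<le> 1" "0 \<le> \<delta>" "\<delta> \<le> \<epsilon> / 4"
    and small: "\<forall>v\<in>V. 0 < w v \<and> w v \<le> \<delta> * sqrt (\<epsilon> / 4) * sum w V" and "0 < sum w V"
    and dense: "(1 - 1 / real r + \<epsilon>) * (sum w V)\<^sup>2 \<le> adj_form adj w V"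
  obtains S where "S \<subseteq> V" "0 < sum w S" "\<forall>v\<in>S. 0 \<le> w v \<and> w v \<le> \<delta> * sum w S"
    and "\<forall>v\<in>S. ((real r - 1) / real r + \<epsilon> / 2) * sum w S \<le> wdeg adj w S v"
proof -
  define c where "c = 1 - 1 / real r + 3 * \<epsilon> / 4"
  have "0 \<le> 1 / real r" "1 / real r \<le> 1"
    using \<open>1 \<le> r\<close> by simp_all
  then have "0 \<le> c" "c \<le> 2"
    unfolding c_def using \<open>0 < \<epsilon>\<close> \<open>\<epsilon> \<le> 1\<close> by linarith+
  have "(c + \<epsilon> / 4) * (sum w V)\<^sup>2 \<le> adj_form adj w V"
    using dense unfolding c_def by (simp add: algebra_simps)
  then obtain S where "S \<subseteq> V" and heavy: "\<epsilon> / 4 * (sum w V)\<^sup>2 \<le> (sum w S)\<^sup>2"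
    and deg: "\<forall>v\<in>S. c * (sum w S - w v / 2) \<le> wdeg adj w S v"
    using obtain_min_wdeg_subset[OF sym irr fin _ \<open>0 \<le> c\<close>] small by blast
  obtain "0 < sum w S" and small_S: "\<forall>v\<in>S. 0 \<le> w v \<and> w v \<le> \<delta> * sum w S"
    using small_weights_of_heavy_subset[OF heavy \<open>S \<subseteq> V\<close> small \<open>0 \<le> \<delta>\<close>] \<open>0 < \<epsilon>\<close> \<open>0 < sum w V\<close>
    by auto
  moreover have "((real r - 1) / real r + \<epsilon> / 2) * sum w S \<le> wdeg adj w S v" if "v \<in> S" for v
  proof -
    have r_eq: "(real r - 1) / real r = 1 - 1 / real r"
      using \<open>1 \<le> r\<close> by (simp add: field_simps)
    have "w v \<le> \<epsilon> / 4 * sum w S"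
      using small_S that \<open>\<delta> \<le> \<epsilon> / 4\<close> \<open>0 < sum w S\<close> by (meson less_imp_le mult_right_mono order_trans)
    moreover have "c * (w v / 2) \<le> w v"
      using \<open>c \<le> 2\<close> small_S that mult_right_mono[of c 2 "w v / 2"] by simp
    moreover have "c * (sum w S - w v / 2)
        = ((real r - 1) / real r + \<epsilon> / 2) * sum w S + \<epsilon> / 4 * sum w S - c * (w v / 2)"
      unfolding c_def r_eq by (simp add: algebra_simps) (simp add: field_simps)
    ultimately show ?thesis
      using deg that by force
  qed
  ultimately show thesis
    using that \<open>S \<subseteq> V\<close> small_S by blast
qed

lemma dense_weighting_forces_blowup:
  assumes "1 \<le> r" "0 < \<epsilon>"
  shows "\<exists>\<theta>>0. \<forall>(adj :: 'a \<Rightarrow> 'a \<Rightarrow> bool) w V. symp adj \<longrightarrow> irreflp adj \<longrightarrow> finite V \<longrightarrow>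
    (\<forall>v\<in>V. 0 < w v \<and> w v \<le> \<theta> * sum w V) \<longrightarrow> 0 < sum w V \<longrightarrow>
    (1 - 1 / real r + \<epsilon>) * (sum w V)\<^sup>2 \<le> adj_form adj w V \<longrightarrow>
    has_blowup adj V (Suc r) t"
proof -
  define \<epsilon>' where "\<epsilon>' = min \<epsilon> 1"
  have "0 < \<epsilon>'" "\<epsilon>' \<le> 1" "\<epsilon>' \<le> \<epsilon>"
    unfolding \<epsilon>'_def using assms by auto
  obtain \<theta>\<^sub>1 where "0 < \<theta>\<^sub>1" and ES: "\<forall>(adj :: 'a \<Rightarrow> 'a \<Rightarrow> bool) w S. symp adj \<longrightarrow> irreflp adj \<longrightarrow>
      finite S \<longrightarrow> (\<forall>v\<in>S. 0 \<le> w v \<and> w v \<le> \<theta>\<^sub>1 * sum w S) \<longrightarrow> 0 < sum w S \<longrightarrow>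
      (\<forall>v\<in>S. ((real r - 1) / real r + \<epsilon>' / 2) * sum w S \<le> wdeg adj w S v) \<longrightarrow>
      has_blowup adj S (Suc r) t"
    using min_wdeg_forces_blowup[of "\<epsilon>' / 2" r t] \<open>0 < \<epsilon>'\<close> by auto
  define \<delta> where "\<delta> = min \<theta>\<^sub>1 (\<epsilon>' / 4)"
  have "0 < \<delta>" "\<delta> \<le> \<theta>\<^sub>1" "\<delta> \<le> \<epsilon>' / 4"
    unfolding \<delta>_def using \<open>0 < \<theta>\<^sub>1\<close> \<open>0 < \<epsilon>'\<close> by auto
  show ?thesis
  proof (intro exI[of _ "\<delta> * sqrt (\<epsilon>' / 4)"] conjI allI impI)
    show "0 < \<delta> * sqrt (\<epsilon>' / 4)"
      using \<open>0 < \<delta>\<close> \<open>0 < \<epsilon>'\<close> by simp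
    fix adj :: "'a \<Rightarrow> 'a \<Rightarrow> bool" and w V
    assume sym: "symp adj" and irr: "irreflp adj" and fin: "finite V"
      and small: "\<forall>v\<in>V. 0 < w v \<and> w v \<le> \<delta> * sqrt (\<epsilon>' / 4) * sum w V" and "0 < sum w V"
      and dense: "(1 - 1 / real r + \<epsilon>) * (sum w V)\<^sup>2 \<le> adj_form adj w V"
    have "(1 - 1 / real r + \<epsilon>') * (sum w V)\<^sup>2 \<le> (1 - 1 / real r + \<epsilon>) * (sum w V)\<^sup>2"
      using \<open>\<epsilon>' \<le> \<epsilon>\<close> by (intro mult_right_mono) simp_all
    then have "(1 - 1 / real r + \<epsilon>') * (sum w V)\<^sup>2 \<le> adj_form adj w V"
      using dense by linarith
    then obtain S where "S \<subseteq> V" "0 < sum w S" "\<forall>v\<in>S. 0 \<le> w v \<and> w v \<le> \<delta> * sum w S"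
      and "\<forall>v\<in>S. ((real r - 1) / real r + \<epsilon>' / 2) * sum w S \<le> wdeg adj w S v"
      using obtain_min_wdeg_subset_of_dense[OF sym irr fin \<open>1 \<le> r\<close> \<open>0 < \<epsilon>'\<close> \<open>\<epsilon>' \<le> 1\<close> _
          \<open>\<delta> \<le> \<epsilon>' / 4\<close> small \<open>0 < sum w V\<close>] \<open>0 < \<delta>\<close> by auto
    moreover have "\<forall>v\<in>S. 0 \<le> w v \<and> w v \<le> \<theta>\<^sub>1 * sum w S"
      using calculation(3) \<open>\<delta> \<le> \<theta>\<^sub>1\<close> \<open>0 < sum w S\<close> by (meson mult_right_mono less_imp_le order_trans)
    ultimately have "has_blowup adj S (Suc r) t"
      using ES sym irr fin finite_subset by blast
    then show "has_blowup adj V (Suc r) t"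
      using \<open>S \<subseteq> V\<close> by (rule has_blowup_mono)
  qed
qed

section \<open>The \<open>p\<close>-spectral radius\<close>

lemma double_sum_eq_twice_ordered:
  fixes f :: "'a::linorder \<Rightarrow> 'a \<Rightarrow> real"
  assumes "finite S" and sym: "\<And>i j. f i j = f j i" and diag: "\<And>i. f i i = 0"
  shows "(\<Sum>i\<in>S. \<Sum>j\<in>S. f i j) = 2 * (\<Sum>(i, j)\<in>{(i, j). i \<in> S \<and> j \<in> S \<and> i < j}. f i j)"
proof -
  have split: "f i j = (if i < j then f i j else 0) + (if j < i then f j i else 0)" for i j
    using sym diag by (cases i j rule: linorder_cases) auto
  have "(\<Sum>i\<in>S. \<Sum>j\<in>S. if j < i then f j i else 0) = (\<Sum>i\<in>S. \<Sum>j\<in>S. if i < j then f i j else 0)"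
    by (rule sum.swap)
  then have "(\<Sum>i\<in>S. \<Sum>j\<in>S. f i j) = 2 * (\<Sum>i\<in>S. \<Sum>j\<in>S. if i < j then f i j else 0)"
    by (subst split) (simp add: sum.distrib)
  also have "(\<Sum>i\<in>S. \<Sum>j\<in>S. if i < j then f i j else 0) = (\<Sum>(i, j)\<in>S \<times> S. if i < j then f i j else 0)"
    by (simp add: sum.cartesian_product)
  also have "\<dots> = (\<Sum>(i, j)\<in>{(i, j). i \<in> S \<and> j \<in> S \<and> i < j}. f i j)"
    using assms(1) by (intro sum.mono_neutral_cong_right) (auto split: if_splits)
  finally show ?thesis .
qed

definition graph_adj :: "nat set set \<Rightarrow> nat \<Rightarrow> nat \<Rightarrow> bool" where
  "graph_adj E i j \<longleftrightarrow> {i, j} \<in> E \<and> i \<noteq> j"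

lemma symp_graph_adj: "symp (graph_adj E)"
  unfolding graph_adj_def by (auto intro: sympI simp: insert_commute)

lemma irreflp_graph_adj: "irreflp (graph_adj E)"
  unfolding graph_adj_def by (auto intro: irreflpI)

lemma p_spectral_radius_eq_Sup_adj_form:
  "p_spectral_radius p n E = Sup {adj_form (graph_adj E) x {1..n} | x. (\<Sum>i\<in>{1..n}. \<bar>x i\<bar> powr p) = 1}"
proof -
  have "adj_form (graph_adj E) x {1..n}
      = 2 * (\<Sum>(i, j)\<in>{(i, j). i \<in> {1..n} \<and> j \<in> {1..n} \<and> i < j \<and> {i, j} \<in> E}. x i * x j)" for x
  proof -
    have "adj_form (graph_adj E) x {1..n}
        = 2 * (\<Sum>(i, j)\<in>{(i, j). i \<in> {1..n} \<and> j \<in> {1..n} \<and> i < j}. if graph_adj E i j then x i * x j else 0)"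
      unfolding adj_form_eq_double_sum
      by (rule double_sum_eq_twice_ordered) (auto simp: graph_adj_def insert_commute)
    also have "(\<Sum>(i, j)\<in>{(i, j). i \<in> {1..n} \<and> j \<in> {1..n} \<and> i < j}. if graph_adj E i j then x i * x j else 0)
        = (\<Sum>(i, j)\<in>{(i, j). i \<in> {1..n} \<and> j \<in> {1..n} \<and> i < j \<and> {i, j} \<in> E}. x i * x j)"
      by (intro sum.mono_neutral_cong_right)
        (auto simp: graph_adj_def split: if_splits intro: finite_subset[of _ "{1..n} \<times> {1..n}"])
    finally show ?thesis .
  qed
  then show ?thesis
    unfolding p_spectral_radius_def by simp
qed

lemma abs_le_one_of_p_unit:
  fixes x :: "'a \<Rightarrow> real"
  assumes "finite S" "0 < p" "(\<Sum>i\<in>S. \<bar>x i\<bar> powr p) = 1" "i \<in> S"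
  shows "\<bar>x i\<bar> \<le> 1"
proof -
  have "\<bar>x i\<bar> powr p \<le> 1"
    using member_le_sum[of i S "\<lambda>i. \<bar>x i\<bar> powr p"] assms by simp
  then have "(\<bar>x i\<bar> powr p) powr (1 / p) \<le> 1 powr (1 / p)"
    using assms(2) by (intro powr_mono2) auto
  then show ?thesis
    using assms(2) by (simp add: powr_powr)
qed

text \<open>Young's inequality \<open>a b \<le> a\<^sup>p / p + b\<^sup>q / q\<close> with \<open>a = y L\<close>, \<open>b = 1 / L\<close> and
  \<open>L\<^sup>p = n\<^bsup>1 - 1/p\<^esup>\<close>; summed over \<open>n\<close> entries it is Hoelder's inequality against the all-ones vector.\<close>
lemma Youngs_inequality_scaled:
  fixes y n p :: real
  assumes "1 < p" "0 \<le> y" "0 < n"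
  shows "y \<le> y powr p * n powr (1 - 1 / p) / p + n powr (- 1 / p) * (1 - 1 / p)"
proof -
  define q where "q = p / (p - 1)"
  define L where "L = n powr ((1 - 1 / p) / p)"
  have "1 < q" "1 / p + 1 / q = 1" "1 / q = 1 - 1 / p"
    unfolding q_def using assms(1) by (simp_all add: field_simps)
  have "0 < L"
    unfolding L_def using \<open>0 < n\<close> by simp
  have Lp: "L powr p = n powr (1 - 1 / p)"
    unfolding L_def using assms(1) by (simp add: powr_powr)
  have "(1 / L) powr q = L powr (- q)"
    using \<open>0 < L\<close> by (simp add: powr_minus_divide powr_divide)
  also have "\<dots> = n powr ((1 - 1 / p) / p * (- q))"
    unfolding L_def by (simp add: powr_powr)
  also have "(1 - 1 / p) / p * (- q) = - 1 / p"
    unfolding q_def using assms(1) by (simp add: field_simps)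
  finally have Lq: "(1 / L) powr q = n powr (- 1 / p)" .
  have "y = (y * L) * (1 / L)"
    using \<open>0 < L\<close> by simp
  also have "\<dots> \<le> (y * L) powr p / p + (1 / L) powr q / q"
    by (rule Youngs_inequality[OF assms(1) \<open>1 < q\<close> \<open>1 / p + 1 / q = 1\<close>]) (use assms \<open>0 < L\<close> in auto)
  also have "\<dots> = y powr p * L powr p / p + (1 / L) powr q * (1 / q)"
    using assms(2) \<open>0 < L\<close> by (simp add: powr_mult)
  finally show ?thesis
    unfolding Lp Lq \<open>1 / q = 1 - 1 / p\<close> .
qed

lemma sum_le_card_powr_of_p_unit:
  assumes "finite S" "1 < p" "\<forall>i\<in>S. 0 \<le> y i" "(\<Sum>i\<in>S. y i powr p) = 1"
  shows "sum y S \<le> real (card S) powr (1 - 1 / p)"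
proof -
  define n where "n = real (card S)"
  have "S \<noteq> {}"
    using assms(4) by auto
  then have "0 < n"
    unfolding n_def using assms(1) by (simp add: card_gt_0_iff)
  have "sum y S \<le> (\<Sum>i\<in>S. y i powr p * n powr (1 - 1 / p) / p + n powr (- 1 / p) * (1 - 1 / p))"
    using Youngs_inequality_scaled[OF assms(2) _ \<open>0 < n\<close>] assms(3) by (intro sum_mono) auto
  also have "\<dots> = n powr (1 - 1 / p) / p + n * n powr (- 1 / p) * (1 - 1 / p)"
    using assms(4) unfolding n_def by (simp add: sum.distrib flip: sum_divide_distrib sum_distrib_right)
  also have "n * n powr (- 1 / p) = n powr (1 - 1 / p)"
    using \<open>0 < n\<close> powr_add[of n 1 "- 1 / p"] by simp
  finally show ?thesis
    unfolding n_def by (simp add: algebra_simps)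
qed

lemma adj_form_le_card_square_of_p_unit:
  fixes x :: "'a \<Rightarrow> real"
  assumes "finite S" "0 < p" "(\<Sum>i\<in>S. \<bar>x i\<bar> powr p) = 1"
  shows "adj_form adj x S \<le> (real (card S))\<^sup>2"
proof -
  have "adj_form adj x S \<le> adj_form adj (\<lambda>i. \<bar>x i\<bar>) S"
    by (rule adj_form_le_abs)
  also have "\<dots> \<le> (\<Sum>i\<in>S. \<bar>x i\<bar>)\<^sup>2"
    by (rule adj_form_le_square) simp
  also have "\<dots> \<le> (real (card S))\<^sup>2"
    using sum_bounded_above[of S "\<lambda>i. \<bar>x i\<bar>" 1] abs_le_one_of_p_unit[OF assms]
    by (intro power_mono) (auto simp: sum_nonneg)
  finally show ?thesis .
qed

lemma adj_form_le_p_spectral_radius: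
  assumes "0 < p" "(\<Sum>i\<in>{1..n}. \<bar>x i\<bar> powr p) = 1"
  shows "adj_form (graph_adj E) x {1..n} \<le> p_spectral_radius p n E"
  unfolding p_spectral_radius_eq_Sup_adj_form
proof (rule cSup_upper)
  show "adj_form (graph_adj E) x {1..n} \<in> {adj_form (graph_adj E) x {1..n} | x. (\<Sum>i\<in>{1..n}. \<bar>x i\<bar> powr p) = 1}"
    using assms(2) by blast
  show "bdd_above {adj_form (graph_adj E) x {1..n} | x. (\<Sum>i\<in>{1..n}. \<bar>x i\<bar> powr p) = 1}"
  proof (rule bdd_aboveI)
    fix z assume "z \<in> {adj_form (graph_adj E) x {1..n} | x. (\<Sum>i\<in>{1..n}. \<bar>x i\<bar> powr p) = 1}"
    then obtain y where "z = adj_form (graph_adj E) y {1..n}" "(\<Sum>i\<in>{1..n}. \<bar>y i\<bar> powr p) = 1"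
      by blast
    then show "z \<le> (real (card {1..n}))\<^sup>2"
      using adj_form_le_card_square_of_p_unit[OF finite_atLeastAtMost assms(1), of y 1 n "graph_adj E"]
      by simp
  qed
qed

lemma p_spectral_radius_le:
  assumes "1 \<le> n" "\<And>x. (\<Sum>i\<in>{1..n}. \<bar>x i\<bar> powr p) = 1 \<Longrightarrow> adj_form (graph_adj E) x {1..n} \<le> B"
  shows "p_spectral_radius p n E \<le> B"
  unfolding p_spectral_radius_eq_Sup_adj_form
proof (rule cSup_least)
  define e\<^sub>1 :: "nat \<Rightarrow> real" where "e\<^sub>1 i = (if i = 1 then 1 else 0)" for i
  have "(\<Sum>i\<in>{1..n}. \<bar>e\<^sub>1 i\<bar> powr p) = (\<Sum>i\<in>{1..n}. if i = 1 then 1 else 0)"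
    unfolding e\<^sub>1_def by (intro sum.cong) auto
  also have "\<dots> = 1"
    using assms(1) by simp
  finally show "{adj_form (graph_adj E) x {1..n} | x. (\<Sum>i\<in>{1..n}. \<bar>x i\<bar> powr p) = 1} \<noteq> {}"
    by blast
  fix z assume "z \<in> {adj_form (graph_adj E) x {1..n} | x. (\<Sum>i\<in>{1..n}. \<bar>x i\<bar> powr p) = 1}"
  then show "z \<le> B"
    using assms(2) by blast
qed

lemma finite_spectral_radii_of_graphs:
  "finite {p_spectral_radius p n E | E. graph_on n E \<and> P E}"
proof (rule finite_subset)
  show "{p_spectral_radius p n E | E. graph_on n E \<and> P E} \<subseteq> p_spectral_radius p n ` Pow (Pow {1..n})"
  proof
    fix z assume "z \<in> {p_spectral_radius p n E | E. graph_on n E \<and> P E}"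
    then obtain E where "z = p_spectral_radius p n E" "graph_on n E"
      by blast
    moreover have "E \<in> Pow (Pow {1..n})"
      using \<open>graph_on n E\<close> unfolding graph_on_def by auto
    ultimately show "z \<in> p_spectral_radius p n ` Pow (Pow {1..n})"
      by blast
  qed
qed simp

lemma p_spectral_radius_le_spectral_ex:
  assumes "graph_on n E" "\<not> contains_subgraph n E m EF"
  shows "p_spectral_radius p n E \<le> spectral_ex p n m EF"
  unfolding spectral_ex_def
proof (rule cSup_upper)
  show "p_spectral_radius p n E
      \<in> {p_spectral_radius p n E | E. graph_on n E \<and> \<not> contains_subgraph n E m EF}"
    using assms by blast
qed (rule bdd_above_finite[OF finite_spectral_radii_of_graphs])

lemma spectral_ex_le:
  assumes "graph_on n E\<^sub>0" "\<not> contains_subgraph n E\<^sub>0 m EF"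
    and "\<And>E. graph_on n E \<Longrightarrow> \<not> contains_subgraph n E m EF \<Longrightarrow> p_spectral_radius p n E \<le> B"
  shows "spectral_ex p n m EF \<le> B"
  unfolding spectral_ex_def
proof (rule cSup_least)
  show "{p_spectral_radius p n E | E. graph_on n E \<and> \<not> contains_subgraph n E m EF} \<noteq> {}"
    using assms(1,2) by blast
qed (use assms(3) in blast)

section \<open>Copies of \<open>F\<close> and the Turan graph\<close>

lemma obtain_proper_colouring_chromatic_number:
  obtains c where "proper_colouring m EF (chromatic_number m EF) c"
proof -
  have "proper_colouring m EF (m + 1) id"
    unfolding proper_colouring_def by auto
  then show thesis
    using that LeastI_ex[of "\<lambda>k. \<exists>c. proper_colouring m EF k c"]
    unfolding chromatic_number_def by blast
qed

lemma not_proper_colouring_below_chromatic_number: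
  "k < chromatic_number m EF \<Longrightarrow> \<not> proper_colouring m EF k c"
  unfolding chromatic_number_def using not_less_Least by blast

lemma obtain_injective_on_colour_classes:
  assumes "\<forall>a<k. finite (P a) \<and> card (P a) = m" "\<forall>i\<in>{1..m}. c i < k"
  obtains f where "\<forall>i\<in>{1..m}. f i \<in> P (c i)"
    and "\<forall>i\<in>{1..m}. \<forall>j\<in>{1..m}. c i = c j \<longrightarrow> f i = f j \<longrightarrow> i = j"
proof -
  have "\<forall>a. \<exists>h. a < k \<longrightarrow> bij_betw h {1..m} (P a)"
    using assms(1) ex_bij_betw_nat_finite_1 by metis
  then obtain h where h: "\<And>a. a < k \<Longrightarrow> bij_betw (h a) {1..m} (P a)"
    by metis
  show thesis
  proof (rule that[of "\<lambda>i. h (c i) i"])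
    show "\<forall>i\<in>{1..m}. h (c i) i \<in> P (c i)"
      using h assms(2) by (auto dest: bij_betwE)
    show "\<forall>i\<in>{1..m}. \<forall>j\<in>{1..m}. c i = c j \<longrightarrow> h (c i) i = h (c j) j \<longrightarrow> i = j"
      using h assms(2) unfolding bij_betw_def inj_on_def by metis
  qed
qed

lemma contains_subgraph_of_has_blowup:
  assumes blowup: "has_blowup (graph_adj E) V k m" and "V \<subseteq> {1..n}"
    and col: "proper_colouring m EF k c" and "graph_on m EF"
  shows "contains_subgraph n E m EF"
proof -
  obtain P where parts: "\<forall>a<k. P a \<subseteq> V \<and> finite (P a) \<and> card (P a) = m"
    and complete: "\<forall>a<k. \<forall>b<k. a \<noteq> b \<longrightarrow> (\<forall>x\<in>P a. \<forall>y\<in>P b. graph_adj E x y)"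
    using blowup unfolding has_blowup_def by (elim exE conjE)
  have c: "\<forall>i\<in>{1..m}. c i < k"
    using col unfolding proper_colouring_def by blast
  obtain f where f_part: "\<forall>i\<in>{1..m}. f i \<in> P (c i)"
    and f_inj: "\<forall>i\<in>{1..m}. \<forall>j\<in>{1..m}. c i = c j \<longrightarrow> f i = f j \<longrightarrow> i = j"
    using obtain_injective_on_colour_classes[OF _ c] parts by blast
  have f_adj: "graph_adj E (f i) (f j)" if "i \<in> {1..m}" "j \<in> {1..m}" "c i \<noteq> c j" for i j
    using complete c f_part that by blast
  show ?thesis
    unfolding contains_subgraph_def
  proof (intro exI[of _ f] conjI)
    show "f ` {1..m} \<subseteq> {1..n}"
      using f_part c parts \<open>V \<subseteq> {1..n}\<close> by blast
    show "inj_on f {1..m}"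
      using f_inj f_adj irreflp_graph_adj by (metis inj_onI irreflpD)
    show "\<forall>e\<in>EF. f ` e \<in> E"
    proof
      fix e assume "e \<in> EF"
      then obtain i j where "e = {i, j}" "i \<noteq> j" "i \<in> {1..m}" "j \<in> {1..m}"
        using \<open>graph_on m EF\<close> unfolding graph_on_def by blast
      then have "c i \<noteq> c j"
        using col \<open>e \<in> EF\<close> unfolding proper_colouring_def by blast
      then show "f ` e \<in> E"
        using f_adj \<open>e = {i, j}\<close> \<open>i \<in> {1..m}\<close> \<open>j \<in> {1..m}\<close> unfolding graph_adj_def by simp
    qed
  qed
qed

lemma graph_on_turan_graph: "graph_on n (turan_graph r n)"
  unfolding graph_on_def turan_graph_def by auto

lemma graph_adj_turan_graph:
  assumes "i \<in> {1..n}" "j \<in> {1..n}"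
  shows "graph_adj (turan_graph r n) i j \<longleftrightarrow> i mod r \<noteq> j mod r"
  using assms unfolding graph_adj_def turan_graph_def by (auto simp: doubleton_eq_iff)

lemma proper_colouring_of_contains_turan_graph:
  assumes "contains_subgraph n (turan_graph r n) m EF" "0 < r"
  obtains c where "proper_colouring m EF r c"
proof -
  obtain f where "\<forall>e\<in>EF. f ` e \<in> turan_graph r n"
    using assms(1) unfolding contains_subgraph_def by blast
  have "f i mod r \<noteq> f j mod r" if "{i, j} \<in> EF" for i j
  proof -
    have "{f i, f j} \<in> turan_graph r n"
      using \<open>\<forall>e\<in>EF. f ` e \<in> turan_graph r n\<close> that by force
    then show ?thesis
      unfolding turan_graph_def by (auto simp: doubleton_eq_iff)
  qed
  then have "proper_colouring m EF r (\<lambda>i. f i mod r)"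
    using assms(2) unfolding proper_colouring_def by simp
  then show thesis
    by (rule that)
qed

lemma turan_graph_free_of_chromatic_number:
  assumes "0 < r" "r < chromatic_number m EF"
  shows "\<not> contains_subgraph n (turan_graph r n) m EF"
  using proper_colouring_of_contains_turan_graph[OF _ assms(1)]
    not_proper_colouring_below_chromatic_number[OF assms(2)] by blast

lemma card_residue_class_le: "card {j \<in> {1..n}. j mod r = k} \<le> n div r + 1"
proof -
  have "inj_on (\<lambda>j. j div r) {j \<in> {1..n}. j mod r = k}"
  proof (rule inj_onI)
    fix a b assume "a \<in> {j \<in> {1..n}. j mod r = k}" "b \<in> {j \<in> {1..n}. j mod r = k}" "a div r = b div r"
    then have "a div r * r + a mod r = b div r * r + b mod r"
      by simp
    then show "a = b"
      by simp
  qed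
  moreover have "(\<lambda>j. j div r) ` {j \<in> {1..n}. j mod r = k} \<subseteq> {0..n div r}"
    by (auto intro: div_le_mono)
  ultimately have "card {j \<in> {1..n}. j mod r = k} \<le> card {0..n div r}"
    by (rule card_inj_on_le) simp
  then show ?thesis
    by simp
qed

lemma wdeg_turan_graph_ge:
  assumes "1 \<le> r" "i \<in> {1..n}"
  shows "real n - real n / real r - 1 \<le> wdeg (graph_adj (turan_graph r n)) (\<lambda>_. 1) {1..n} i"
proof -
  have "wdeg (graph_adj (turan_graph r n)) (\<lambda>_. 1) {1..n} i = (\<Sum>j\<in>{1..n}. 1 - (if j mod r = i mod r then 1 else 0))"
    unfolding wdeg_def using graph_adj_turan_graph[OF assms(2)] by (intro sum.cong) auto
  also have "\<dots> = real n - real (card {j \<in> {1..n}. j mod r = i mod r})"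
    by (simp add: sum_subtractf sum.inter_filter[symmetric])
  finally have deg: "wdeg (graph_adj (turan_graph r n)) (\<lambda>_. 1) {1..n} i
      = real n - real (card {j \<in> {1..n}. j mod r = i mod r})" .
  have "real (n div r * r) \<le> real n"
    by (simp only: of_nat_le_iff div_times_less_eq_dividend)
  then have "real (n div r) * real r \<le> real n"
    by simp
  then have "real (n div r) \<le> real n / real r"
    using assms(1) by (simp add: le_divide_eq)
  moreover have "real (card {j \<in> {1..n}. j mod r = i mod r}) \<le> real (n div r) + 1"
    using card_residue_class_le[of n r "i mod r"] by linarith
  ultimately show ?thesis
    unfolding deg by linarith
qed

lemma adj_form_const: "adj_form adj (\<lambda>_. c) S = c\<^sup>2 * (\<Sum>i\<in>S. wdeg adj (\<lambda>_. 1) S i)"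
proof -
  have "wdeg adj (\<lambda>_. c) S i = c * wdeg adj (\<lambda>_. 1) S i" for i
    unfolding wdeg_def sum_distrib_left by (intro sum.cong) auto
  then show ?thesis
    unfolding adj_form_def by (simp add: sum_distrib_left power2_eq_square mult.assoc)
qed

lemma p_spectral_radius_turan_graph_ge:
  assumes "1 \<le> r" "0 < p" "1 \<le> n"
  shows "(1 - 1 / real r) * real n powr (2 - 2 / p) - real n powr (2 - 2 / p) / real n
    \<le> p_spectral_radius p n (turan_graph r n)"
proof -
  define c where "c = real n powr (- 1 / p)"
  have "0 < real n"
    using assms(3) by simp
  have "c powr p = real n powr (- 1)"
    unfolding c_def using assms(2) by (simp add: powr_powr)
  then have unit: "(\<Sum>i\<in>{1..n}. \<bar>c\<bar> powr p) = 1"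
    using \<open>0 < real n\<close> by (simp add: c_def powr_minus)
  have "c\<^sup>2 = real n powr (- 2 / p)"
    unfolding c_def using \<open>0 < real n\<close> by (simp add: powr_power)
  moreover have "real n powr (2 + (- 2 / p)) = real n powr 2 * real n powr (- 2 / p)"
    by (rule powr_add)
  ultimately have N: "real n powr (2 - 2 / p) = real n ^ 2 * c\<^sup>2"
    using powr_realpow[OF \<open>0 < real n\<close>, of 2] by simp
  have "(1 - 1 / real r) * real n powr (2 - 2 / p) - real n powr (2 - 2 / p) / real n
      = c\<^sup>2 * (real n * (real n - real n / real r - 1))"
    unfolding N using \<open>0 < real n\<close> by (simp add: power2_eq_square field_simps)
  also have "\<dots> \<le> c\<^sup>2 * (\<Sum>i\<in>{1..n}. wdeg (graph_adj (turan_graph r n)) (\<lambda>_. 1) {1..n} i)"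
    using sum_bounded_below[of "{1..n}" "real n - real n / real r - 1"] wdeg_turan_graph_ge[OF assms(1)]
    by (intro mult_left_mono) auto
  also have "\<dots> = adj_form (graph_adj (turan_graph r n)) (\<lambda>_. c) {1..n}"
    by (simp add: adj_form_const)
  also have "\<dots> \<le> p_spectral_radius p n (turan_graph r n)"
    by (rule adj_form_le_p_spectral_radius[OF assms(2) unit])
  finally show ?thesis .
qed

section \<open>Asymptotics\<close>

lemma eventually_le_powr_at_top:
  assumes "0 < a"
  shows "eventually (\<lambda>n. K \<le> real n powr a) at_top"
  using eventually_ge_at_top[of "nat \<lceil>\<bar>K\<bar> powr (1 / a)\<rceil>"]
proof eventually_elim
  case (elim n)
  then have "\<bar>K\<bar> powr (1 / a) \<le> real n"
    by linarith
  then have "(\<bar>K\<bar> powr (1 / a)) powr a \<le> real n powr a"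
    using assms by (intro powr_mono2) auto
  moreover have "K \<le> (\<bar>K\<bar> powr (1 / a)) powr a"
    using assms by (cases "K = 0") (auto simp: powr_powr)
  ultimately show ?case
    by linarith
qed

lemma abs_support_of_p_unit:
  fixes x :: "'a \<Rightarrow> real"
  assumes "finite S" "1 < p" "(\<Sum>i\<in>S. \<bar>x i\<bar> powr p) = 1"
  shows "adj_form adj x S \<le> adj_form adj (\<lambda>i. \<bar>x i\<bar>) {i \<in> S. x i \<noteq> 0}"
    and "(\<Sum>i\<in>{i \<in> S. x i \<noteq> 0}. \<bar>x i\<bar>) \<le> real (card S) powr (1 - 1 / p)"
    and "\<forall>v\<in>{i \<in> S. x i \<noteq> 0}. 0 < \<bar>x v\<bar> \<and> \<bar>x v\<bar> \<le> 1"
proof -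
  show "adj_form adj x S \<le> adj_form adj (\<lambda>i. \<bar>x i\<bar>) {i \<in> S. x i \<noteq> 0}"
    using adj_form_le_abs[of adj x S] adj_form_support[OF assms(1), of "{i \<in> S. x i \<noteq> 0}"] by auto
  have "(\<Sum>i\<in>{i \<in> S. x i \<noteq> 0}. \<bar>x i\<bar>) = (\<Sum>i\<in>S. \<bar>x i\<bar>)"
    using assms(1) by (intro sum.mono_neutral_left) auto
  then show "(\<Sum>i\<in>{i \<in> S. x i \<noteq> 0}. \<bar>x i\<bar>) \<le> real (card S) powr (1 - 1 / p)"
    using sum_le_card_powr_of_p_unit[OF assms(1,2) _ assms(3)] by simp
  show "\<forall>v\<in>{i \<in> S. x i \<noteq> 0}. 0 < \<bar>x v\<bar> \<and> \<bar>x v\<bar> \<le> 1"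
    using abs_le_one_of_p_unit[OF assms(1) _ assms(3)] assms(2) by auto
qed

lemma has_blowup_of_large_p_unit_form:
  fixes adj :: "nat \<Rightarrow> nat \<Rightarrow> bool"
  assumes "1 < p" "0 < \<epsilon>"
    and dense_blowup: "\<forall>(adj :: nat \<Rightarrow> nat \<Rightarrow> bool) w V. symp adj \<longrightarrow> irreflp adj \<longrightarrow> finite V \<longrightarrow>
      (\<forall>v\<in>V. 0 < w v \<and> w v \<le> \<theta> * sum w V) \<longrightarrow> 0 < sum w V \<longrightarrow>
      (1 - 1 / real r + \<epsilon>) * (sum w V)\<^sup>2 \<le> adj_form adj w V \<longrightarrow> has_blowup adj V (Suc r) t"
    and "1 \<le> r" "0 < \<theta>" and n: "1 \<le> \<theta> * sqrt \<epsilon> * real n powr (1 - 1 / p)"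
    and sym: "symp adj" and irr: "irreflp adj" and unit: "(\<Sum>i\<in>{1..n}. \<bar>x i\<bar> powr p) = 1"
    and big: "(1 - 1 / real r + \<epsilon>) * real n powr (2 - 2 / p) < adj_form adj x {1..n}"
  shows "has_blowup adj {1..n} (Suc r) t"
proof -
  define V where "V = {i \<in> {1..n}. x i \<noteq> 0}"
  define y where "y i = \<bar>x i\<bar>" for i
  define \<rho> where "\<rho> = 1 - 1 / real r + \<epsilon>"
  define N where "N = real n powr (1 - 1 / p)"
  note support = abs_support_of_p_unit(1)[OF finite_atLeastAtMost \<open>1 < p\<close> unit, of adj]
    abs_support_of_p_unit(2,3)[OF finite_atLeastAtMost \<open>1 < p\<close> unit]
  note support = support[folded V_def y_def]
  have "\<epsilon> \<le> \<rho>"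
    unfolding \<rho>_def using \<open>1 \<le> r\<close> by simp
  have "0 \<le> sum y V"
    unfolding y_def by (simp add: sum_nonneg)
  have N2: "N\<^sup>2 = real n powr (2 - 2 / p)"
    unfolding N_def by (simp add: power2_eq_square powr_add[symmetric])
  have form_le: "adj_form adj x {1..n} \<le> (sum y V)\<^sup>2"
    using support(1) adj_form_le_square[of V y adj] unfolding y_def by fastforce
  have "(sum y V)\<^sup>2 \<le> N\<^sup>2"
    using support(2) \<open>0 \<le> sum y V\<close> unfolding N_def by (simp add: power_mono)
  then have "\<rho> * (sum y V)\<^sup>2 \<le> \<rho> * N\<^sup>2"
    using \<open>\<epsilon> \<le> \<rho>\<close> \<open>0 < \<epsilon>\<close> by (intro mult_left_mono) simp_all
  then have dense: "\<rho> * (sum y V)\<^sup>2 \<le> adj_form adj y V"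
    using big support(1) unfolding \<rho>_def N2[symmetric] by linarith
  have "\<epsilon> * N\<^sup>2 \<le> \<rho> * N\<^sup>2"
    using \<open>\<epsilon> \<le> \<rho>\<close> by (intro mult_right_mono) simp_all
  then have "\<epsilon> * N\<^sup>2 \<le> (sum y V)\<^sup>2"
    using big form_le unfolding \<rho>_def N2[symmetric] by linarith
  then have "\<theta> * (sqrt \<epsilon> * N) \<le> \<theta> * sum y V"
    using sqrt_mult_le_of_mult_square_le \<open>0 \<le> sum y V\<close> \<open>0 < \<theta>\<close> unfolding N_def
    by (intro mult_left_mono) simp_all
  then have "1 \<le> \<theta> * sum y V"
    using n unfolding N_def by (simp add: mult.assoc)
  then have "\<forall>v\<in>V. 0 < y v \<and> y v \<le> \<theta> * sum y V" "0 < sum y V"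
    using support(3) zero_less_mult_pos[of \<theta> "sum y V"] \<open>0 < \<theta>\<close> by fastforce+
  then have "has_blowup adj V (Suc r) t"
    using dense_blowup[rule_format, OF sym irr _ _ _ dense[unfolded \<rho>_def]] unfolding V_def by simp
  then show ?thesis
    by (rule has_blowup_mono) (auto simp: V_def)
qed

lemma eventually_p_unit_form_le:
  assumes "1 \<le> r" "1 < p" "0 < \<epsilon>"
  shows "eventually (\<lambda>n. \<forall>(adj :: nat \<Rightarrow> nat \<Rightarrow> bool) x. symp adj \<longrightarrow> irreflp adj \<longrightarrow>
    (\<Sum>i\<in>{1..n}. \<bar>x i\<bar> powr p) = 1 \<longrightarrow> \<not> has_blowup adj {1..n} (Suc r) t \<longrightarrow>
    adj_form adj x {1..n} \<le> (1 - 1 / real r + \<epsilon>) * real n powr (2 - 2 / p)) at_top"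
proof -
  obtain \<theta> where "0 < \<theta>" and dense_blowup: "\<forall>(adj :: nat \<Rightarrow> nat \<Rightarrow> bool) w V. symp adj \<longrightarrow>
      irreflp adj \<longrightarrow> finite V \<longrightarrow> (\<forall>v\<in>V. 0 < w v \<and> w v \<le> \<theta> * sum w V) \<longrightarrow> 0 < sum w V \<longrightarrow>
      (1 - 1 / real r + \<epsilon>) * (sum w V)\<^sup>2 \<le> adj_form adj w V \<longrightarrow> has_blowup adj V (Suc r) t"
    using dense_weighting_forces_blowup[OF assms(1,3)] by blast
  have "eventually (\<lambda>n. 1 / (\<theta> * sqrt \<epsilon>) \<le> real n powr (1 - 1 / p)) at_top"
    using assms(2) by (intro eventually_le_powr_at_top) simp
  then show ?thesis
  proof eventually_elim
    case (elim n)
    then have "1 \<le> \<theta> * sqrt \<epsilon> * real n powr (1 - 1 / p)"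
      using \<open>0 < \<theta>\<close> \<open>0 < \<epsilon>\<close> by (simp add: field_simps)
    then show ?case
      using has_blowup_of_large_p_unit_form[OF assms(2,3) dense_blowup assms(1) \<open>0 < \<theta>\<close>] not_le
      by blast
  qed
qed

lemma eventually_spectral_ex_le:
  assumes "1 \<le> r" "1 < p" "0 < \<epsilon>" "graph_on m EF" "chromatic_number m EF = r + 1"
  shows "eventually (\<lambda>n. spectral_ex p n m EF \<le> (1 - 1 / real r + \<epsilon>) * real n powr (2 - 2 / p)) at_top"
  using eventually_p_unit_form_le[OF assms(1-3), of m] eventually_ge_at_top[of 1]
proof eventually_elim
  case (elim n)
  obtain c where col: "proper_colouring m EF (Suc r) c"
    using obtain_proper_colouring_chromatic_number[of m EF] assms(5) by auto
  have turan_free: "\<not> contains_subgraph n (turan_graph r n) m EF"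
    using assms(1,5) by (intro turan_graph_free_of_chromatic_number) auto
  show ?case
  proof (rule spectral_ex_le[OF graph_on_turan_graph turan_free])
    fix E assume "graph_on n E" "\<not> contains_subgraph n E m EF"
    then have "\<not> has_blowup (graph_adj E) {1..n} (Suc r) m"
      using contains_subgraph_of_has_blowup[OF _ _ col assms(4)] by blast
    then show "p_spectral_radius p n E \<le> (1 - 1 / real r + \<epsilon>) * real n powr (2 - 2 / p)"
      using elim symp_graph_adj irreflp_graph_adj by (intro p_spectral_radius_le) auto
  qed
qed

lemma eventually_p_spectral_radius_turan_graph_ge:
  assumes "1 \<le> r" "0 < p" "0 < \<epsilon>"
  shows "eventually (\<lambda>n. (1 - 1 / real r - \<epsilon>) * real n powr (2 - 2 / p)
    \<le> p_spectral_radius p n (turan_graph r n)) at_top"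
  using eventually_ge_at_top[of "max 1 (nat \<lceil>1 / \<epsilon>\<rceil>)"]
proof eventually_elim
  case (elim n)
  then have "1 \<le> n" "1 / \<epsilon> \<le> real n"
    by linarith+
  then have "real n powr (2 - 2 / p) / real n \<le> \<epsilon> * real n powr (2 - 2 / p)"
    using assms(3) by (simp add: field_simps mult_left_mono)
  then show ?case
    using p_spectral_radius_turan_graph_ge[OF assms(1,2) \<open>1 \<le> n\<close>] by (simp add: algebra_simps)
qed

lemma sandwich_asymptotics:
  fixes X T N :: "nat \<Rightarrow> real"
  assumes bounds: "\<And>\<epsilon>. 0 < \<epsilon> \<Longrightarrow> eventually (\<lambda>n. (a - \<epsilon>) * N n \<le> T n \<and> T n \<le> X n \<and> X n \<le> (a + \<epsilon>) * N n) at_top"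
    and pos: "eventually (\<lambda>n. 0 < N n) at_top"
  shows "(\<lambda>n. X n - T n) \<in> o(N) \<and> ((\<lambda>n. X n / N n) \<longlongrightarrow> a) at_top"
proof
  show "(\<lambda>n. X n - T n) \<in> o(N)"
  proof (rule landau_o.smallI)
    fix c :: real assume "0 < c"
    then have "0 < c / 2"
      by simp
    from bounds[OF this] pos show "eventually (\<lambda>n. norm (X n - T n) \<le> c * norm (N n)) at_top"
      by eventually_elim (simp add: algebra_simps)
  qed
  show "((\<lambda>n. X n / N n) \<longlongrightarrow> a) at_top"
  proof (rule tendstoI)
    fix e :: real assume "0 < e"
    then have "0 < e / 2"
      by simp
    from bounds[OF this] pos show "eventually (\<lambda>n. dist (X n / N n) a < e) at_top"
    proof eventually_elim
      case (elim n)
      then have "(a - e / 2) * N n \<le> X n" "X n \<le> (a + e / 2) * N n"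
        by linarith+
      then have "a - e / 2 \<le> X n / N n" "X n / N n \<le> a + e / 2"
        using elim by (simp_all add: field_simps)
      then show ?case
        using \<open>0 < e\<close> by (simp add: dist_real_def abs_less_iff)
    qed
  qed
qed

theorem theorem3p10:
  fixes r m :: nat and EF :: "nat set set" and p :: real
  assumes "r \<ge> 1"
    and "graph_on m EF"
    and "chromatic_number m EF = r + 1"
    and "p > 1"
  shows "((\<lambda>n. spectral_ex p n m EF - p_spectral_radius p n (turan_graph r n))
           \<in> o[at_top](\<lambda>n. real n powr (2 - 2 / p)))
         \<and> ((\<lambda>n. spectral_ex p n m EF / real n powr (2 - 2 / p)) \<longlongrightarrow> 1 - 1 / real r) at_top"
proof (rule sandwich_asymptotics)
  have turan_free: "\<not> contains_subgraph n (turan_graph r n) m EF" for n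
    using assms(1,3) by (intro turan_graph_free_of_chromatic_number) auto
  fix \<epsilon> :: real assume "0 < \<epsilon>"
  have "0 < p"
    using assms(4) by simp
  from eventually_p_spectral_radius_turan_graph_ge[OF assms(1) \<open>0 < p\<close> \<open>0 < \<epsilon>\<close>]
    eventually_spectral_ex_le[OF assms(1,4) \<open>0 < \<epsilon>\<close> assms(2,3)]
  show "eventually (\<lambda>n. (1 - 1 / real r - \<epsilon>) * real n powr (2 - 2 / p) \<le> p_spectral_radius p n (turan_graph r n)
      \<and> p_spectral_radius p n (turan_graph r n) \<le> spectral_ex p n m EF
      \<and> spectral_ex p n m EF \<le> (1 - 1 / real r + \<epsilon>) * real n powr (2 - 2 / p)) at_top"
    by eventually_elim (simp add: p_spectral_radius_le_spectral_ex[OF graph_on_turan_graph turan_free])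
next
  show "eventually (\<lambda>n. 0 < real n powr (2 - 2 / p)) at_top"
    using eventually_gt_at_top[of 0] by eventually_elim simp
qed

end
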